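(* Suppose $2\le m\le n$. If $P_1,\dots,P_\ell$ are deterministic perfect channels from $\{1,\dots,m\}$ to $\{1,\dots,n\}$ such that at least one column of $P_1+\cdots+P_\ell$ has more than one nonzero entry, then $\{P_1,\dots,P_\ell\}$ is not $\mathcal{I}$-minimized.
   Context: Channels from $\{1,\dots,m\}$ to $\{1,\dots,n\}$ are $m\times n$ row-stochastic matrices; $\mathcal{D}$ is the set of deterministic (0-1) channels, $\mathrm{rank}(D)$ the matrix rank. A deterministic perfect channel is a deterministic channel of rank $\min(m,n)$. For a channel $W$, $\Lambda(W)=\{\lambda\text{ probability distribution on }\mathcal{D}: W=\sum_D\lambda_DD\}$, $C_{11}(\lambda)=\sum_D\lambda_D\log_2\mathrm{rank}(D)$, $\underline{C}_{11}(W)=\inf_{\lambda\in\Lambda(W)}C_{11}(\lambda)$. A subset $S\subseteq\mathcal{D}$ is $\mathcal{I}$-minimized if there is a probability distribution $\lambda$ on $\mathcal{D}$ with $\mathrm{supp}(\lambda)=S$ and $C_{11}(\lambda)=\underline{C}_{11}(W)$ where $W=\sum_D\lambda_DD$. *)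

theory Defs
  imports "HOL-Analysis.Analysis"
begin

text \<open>Channels from an input alphabet of size CARD('m) to an output alphabet of size
CARD('n) are represented as matrices of type real^'n^'m: row i (an input) is W $ i,
entry W $ i $ j is the probability of output j given input i.\<close>

definition channel :: "real^'n::finite^'m::finite \<Rightarrow> bool" where
  "channel W \<longleftrightarrow> (\<forall>i j. W $ i $ j \<ge> 0) \<and> (\<forall>i. (\<Sum>j\<in>UNIV. W $ i $ j) = 1)"

definition deterministic :: "real^'n::finite^'m::finite \<Rightarrow> bool" where
  "deterministic D \<longleftrightarrow> channel D \<and> (\<forall>i j. D $ i $ j = 0 \<or> D $ i $ j = 1)"

definition det_channels :: "(real^'n::finite^'m::finite) set" where
  "det_channels = {D. deterministic D}"

definition perfect :: "real^'n::finite^'m::finite \<Rightarrow> bool" where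
  "perfect D \<longleftrightarrow> deterministic D \<and> rank D = min CARD('m) CARD('n)"

definition is_distribution :: "(real^'n::finite^'m::finite \<Rightarrow> real) \<Rightarrow> bool" where
  "is_distribution lam \<longleftrightarrow> (\<forall>D. lam D \<ge> 0) \<and> (\<forall>D. D \<notin> det_channels \<longrightarrow> lam D = 0)
     \<and> (\<Sum>D\<in>det_channels. lam D) = 1"

definition supp :: "(real^'n::finite^'m::finite \<Rightarrow> real) \<Rightarrow> (real^'n^'m) set" where
  "supp lam = {D\<in>det_channels. lam D \<noteq> 0}"

definition mixture :: "(real^'n::finite^'m::finite \<Rightarrow> real) \<Rightarrow> real^'n^'m" where
  "mixture lam = (\<Sum>D\<in>det_channels. lam D *\<^sub>R D)"

definition Lambda :: "real^'n::finite^'m::finite \<Rightarrow> (real^'n^'m \<Rightarrow> real) set" where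
  "Lambda W = {lam. is_distribution lam \<and> mixture lam = W}"

definition C11 :: "(real^'n::finite^'m::finite \<Rightarrow> real) \<Rightarrow> real" where
  "C11 lam = (\<Sum>D\<in>det_channels. lam D * log 2 (real (rank D)))"

definition C11_lower :: "real^'n::finite^'m::finite \<Rightarrow> real" where
  "C11_lower W = (INF lam\<in>Lambda W. C11 lam)"

definition I_minimized :: "(real^'n::finite^'m::finite) set \<Rightarrow> bool" where
  "I_minimized S \<longleftrightarrow> (\<exists>lam. is_distribution lam \<and> supp lam = S \<and> C11 lam = C11_lower (mixture lam))"

end

theory Submission
  imports Defs
begin

text \<open>Two perfect channels A and B of full rank m hit a common output j from different inputs
i1 and i2. Swapping row i2 between them gives deterministic channels D1, D2 with
D1 + D2 = A + B, where D1 has two equal rows and hence rank < m. Moving a small mass e from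
A and B to D1 and D2 keeps the mixture and strictly lowers C11, so no distribution supported
on the P k attains the infimum.\<close>

lemma rank_less_if_equal_rows:
  fixes A :: "real^'n::finite^'m::finite"
  assumes "i1 \<noteq> i2" "A $ i1 = A $ i2"
  shows "rank A < CARD('m)"
proof -
  have sub: "rows A \<subseteq> (\<lambda>i. row i A) ` (UNIV - {i2})"
    using assms by (auto simp: rows_def row_def) (metis DiffI UNIV_I image_eqI singletonD)
  then have "card (rows A) \<le> card ((\<lambda>i. row i A) ` (UNIV - {i2}))"
    by (intro card_mono) auto
  also have "\<dots> \<le> card (UNIV - {i2})"
    by (rule card_image_le) simp
  also have "\<dots> < CARD('m)"
    by (simp add: card_Diff_singleton)
  finally have "card (rows A) < CARD('m)" .
  moreover have "dim (rows A) \<le> card (rows A)"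
    by (rule dim_le_card') (rule finite_subset[OF sub], simp)
  ultimately show ?thesis
    by (simp add: row_rank_def)
qed

lemma log2_of_nat_less:
  assumes "r < c" "2 \<le> c"
  shows "log 2 (real r) < log 2 (real c)"
  using assms by (cases "r = 0") (auto simp: log_def divide_strict_right_mono)

lemma log2_rank_nonneg: "0 \<le> log 2 (real (rank A))"
  by (cases "rank A = 0") (auto simp: log_def)

lemma deterministic_row_eq_axis:
  fixes D :: "real^'n::finite^'m::finite"
  assumes "deterministic D" "D $ i $ j \<noteq> 0"
  shows "D $ i = axis j 1"
proof -
  have nonneg: "\<forall>k. D $ i $ k \<ge> 0" and total: "(\<Sum>k\<in>UNIV. D $ i $ k) = 1"
    and one: "D $ i $ j = 1"
    using assms by (auto simp: deterministic_def channel_def)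
  have "(\<Sum>k\<in>UNIV-{j}. D $ i $ k) = 0"
    using total one by (simp add: sum.remove[of UNIV j])
  then have "\<forall>k\<in>UNIV-{j}. D $ i $ k = 0"
    using nonneg by (subst (asm) sum_nonneg_eq_0_iff) auto
  then show ?thesis
    using one by (auto simp: vec_eq_iff axis_def)
qed

lemma finite_det_channels: "finite (det_channels :: (real^'n::finite^'m::finite) set)"
proof -
  have "det_channels \<subseteq>
      range (\<lambda>f::'m \<Rightarrow> 'n \<Rightarrow> bool. (\<chi> i j. if f i j then 1 else 0) :: real^'n^'m)"
  proof
    fix D :: "real^'n^'m"
    assume "D \<in> det_channels"
    then have "D = (\<chi> i j. if D $ i $ j = 1 then 1 else 0)"
      by (auto simp: det_channels_def deterministic_def vec_eq_iff)
    then show "D \<in> range (\<lambda>f. (\<chi> i j. if f i j then 1 else 0))"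
      by (rule image_eqI[where x="\<lambda>i j. D $ i $ j = 1"]) simp_all
  qed
  then show ?thesis
    by (rule finite_subset) simp
qed

definition row_exchange :: "'m::finite \<Rightarrow> real^'n::finite^'m \<Rightarrow> real^'n^'m \<Rightarrow> real^'n^'m" where
  "row_exchange i A B = (\<chi> k. if k = i then B $ k else A $ k)"

lemma deterministic_row_exchange:
  "deterministic A \<Longrightarrow> deterministic B \<Longrightarrow> deterministic (row_exchange i A B)"
  unfolding row_exchange_def deterministic_def channel_def by auto

lemma row_exchange_add: "row_exchange i A B + row_exchange i B A = A + B"
  by (auto simp: vec_eq_iff row_exchange_def)

lemma sum_delta_scaleR:
  fixes f :: "'a \<Rightarrow> 'b::real_vector"
  assumes "finite S" "X \<in> S"
  shows "(\<Sum>D\<in>S. (if D = X then c else 0) *\<^sub>R f D) = c *\<^sub>R f X"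
proof -
  have "(\<Sum>D\<in>S. (if D = X then c else 0) *\<^sub>R f D) = (\<Sum>D\<in>S. if D = X then c *\<^sub>R f X else 0)"
    by (rule sum.cong) auto
  with assms show ?thesis
    by simp
qed

lemma C11_lower_le:
  assumes "is_distribution lam"
  shows "C11_lower (mixture lam) \<le> C11 lam"
  unfolding C11_lower_def
proof (rule cINF_lower)
  show "lam \<in> Lambda (mixture lam)"
    using assms by (simp add: Lambda_def)
  show "bdd_below (C11 ` Lambda (mixture lam))"
    by (rule bdd_belowI[where m=0])
      (auto simp: Lambda_def C11_def is_distribution_def log2_rank_nonneg intro!: sum_nonneg)
qed

text \<open>The new weights stay nonnegative because A \<noteq> B: no channel loses more than e.\<close>

lemma C11_lower_less_if_exchange:
  fixes lam :: "real^'n::finite^'m::finite \<Rightarrow> real"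
  assumes dist: "is_distribution lam" and pos: "lam A > 0" "lam B > 0" and "A \<noteq> B"
    and det: "D1 \<in> det_channels" "D2 \<in> det_channels" and sum_eq: "D1 + D2 = A + B"
    and cheaper: "log 2 (rank D1) + log 2 (rank D2) < log 2 (rank A) + log 2 (rank B)"
  shows "C11_lower (mixture lam) < C11 lam"
proof -
  have fin: "finite (det_channels :: (real^'n^'m) set)"
    by (rule finite_det_channels)
  have AB: "A \<in> det_channels" "B \<in> det_channels"
    using dist pos by (auto simp: is_distribution_def)
  define e where "e = min (lam A) (lam B)"
  have "e > 0"
    using pos by (simp add: e_def)
  define \<delta> :: "real^'n^'m \<Rightarrow> real^'n^'m \<Rightarrow> real" where "\<delta> X D = (if D = X then e else 0)" for X D
  define lam' where "lam' D = lam D + \<delta> D1 D + \<delta> D2 D - \<delta> A D - \<delta> B D" for D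
  have sum_\<delta>: "(\<Sum>D\<in>det_channels. \<delta> X D *\<^sub>R f D) = e *\<^sub>R f X" if "X \<in> det_channels"
    for X and f :: "real^'n^'m \<Rightarrow> 'v::real_vector"
    unfolding \<delta>_def using sum_delta_scaleR[OF fin that] .
  have sum_\<delta>_mult: "(\<Sum>D\<in>det_channels. \<delta> X D * f D) = e * f X" if "X \<in> det_channels" for X f
    using sum_\<delta>[OF that, of f] by (simp add: real_scaleR_def)
  have lam'_dist: "is_distribution lam'"
  proof -
    have "lam' D \<ge> 0" for D
      using dist \<open>A \<noteq> B\<close> \<open>e > 0\<close> by (auto simp: lam'_def \<delta>_def e_def is_distribution_def)
    moreover have "(\<Sum>D\<in>det_channels. lam' D) = 1"
      using dist sum_\<delta>[OF AB(1), of "\<lambda>_. 1::real"] sum_\<delta>[OF AB(2), of "\<lambda>_. 1::real"]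
        sum_\<delta>[OF det(1), of "\<lambda>_. 1::real"] sum_\<delta>[OF det(2), of "\<lambda>_. 1::real"]
      by (simp add: lam'_def is_distribution_def sum.distrib sum_subtractf)
    ultimately show ?thesis
      using dist AB det by (auto simp: lam'_def \<delta>_def is_distribution_def)
  qed
  have "mixture lam' = mixture lam + e *\<^sub>R (D1 + D2) - e *\<^sub>R (A + B)"
    unfolding mixture_def lam'_def
    by (simp add: scaleR_add_left scaleR_diff_left sum.distrib sum_subtractf
        sum_\<delta>[OF AB(1)] sum_\<delta>[OF AB(2)] sum_\<delta>[OF det(1)] sum_\<delta>[OF det(2)] scaleR_add_right)
  then have "mixture lam' = mixture lam"
    by (simp add: sum_eq)
  moreover have "C11 lam' = C11 lam
      + e * (log 2 (rank D1) + log 2 (rank D2) - log 2 (rank A) - log 2 (rank B))"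
    using sum_\<delta>_mult[OF AB(1)] sum_\<delta>_mult[OF AB(2)] sum_\<delta>_mult[OF det(1)]
      sum_\<delta>_mult[OF det(2)]
    unfolding C11_def lam'_def
    by (simp add: ring_distribs sum.distrib sum_subtractf)
  moreover have "\<dots> < C11 lam"
    using \<open>e > 0\<close> cheaper by (simp add: mult_less_0_iff)
  ultimately show ?thesis
    using C11_lower_le[OF lam'_dist] by simp
qed

lemma perfect_exchange_cheaper:
  fixes A B :: "real^'n::finite^'m::finite"
  assumes "2 \<le> CARD('m)" "CARD('m) \<le> CARD('n)" and "perfect A" "perfect B"
    and "i1 \<noteq> i2" "A $ i1 $ j \<noteq> 0" "B $ i2 $ j \<noteq> 0"
  defines "D1 \<equiv> row_exchange i2 A B" and "D2 \<equiv> row_exchange i2 B A"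
  shows "A \<noteq> B" and "D1 \<in> det_channels" and "D2 \<in> det_channels" and "D1 + D2 = A + B"
    and "log 2 (rank D1) + log 2 (rank D2) < log 2 (rank A) + log 2 (rank B)"
proof -
  have det: "deterministic A" "deterministic B"
    and rank: "rank A = CARD('m)" "rank B = CARD('m)"
    using assms(2-4) by (auto simp: perfect_def)
  have rows: "A $ i1 = axis j 1" "B $ i2 = axis j 1"
    using assms(6,7) det by (simp_all add: deterministic_row_eq_axis)
  show "A \<noteq> B"
    using rank_less_if_equal_rows[OF \<open>i1 \<noteq> i2\<close>, of A] rows rank by auto
  show "D1 \<in> det_channels" "D2 \<in> det_channels"
    using det by (simp_all add: D1_def D2_def det_channels_def deterministic_row_exchange)
  show "D1 + D2 = A + B"
    by (simp add: D1_def D2_def row_exchange_add)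
  have "D1 $ i1 = D1 $ i2"
    using rows \<open>i1 \<noteq> i2\<close> by (simp add: D1_def row_exchange_def)
  then have "log 2 (rank D1) < log 2 CARD('m)"
    using rank_less_if_equal_rows[OF \<open>i1 \<noteq> i2\<close>] assms(1) log2_of_nat_less by blast
  moreover have "log 2 (rank D2) \<le> log 2 CARD('m)"
    using rank_bound[of D2] assms(1) log2_of_nat_less[of "rank D2" "CARD('m)"]
    by (cases "rank D2 = CARD('m)") auto
  ultimately show "log 2 (rank D1) + log 2 (rank D2) < log 2 (rank A) + log 2 (rank B)"
    using rank by simp
qed

theorem proposition4:
  fixes P :: "nat \<Rightarrow> real^'n::finite^'m::finite" and l :: nat
  assumes "2 \<le> CARD('m)" and "CARD('m) \<le> CARD('n)"
    and "\<forall>k\<in>{1..l}. perfect (P k)"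
    and "\<exists>j. card {i. (\<Sum>k=1..l. P k) $ i $ j \<noteq> 0} > 1"
  shows "\<not> I_minimized (P ` {1..l})"
proof
  assume "I_minimized (P ` {1..l})"
  then obtain lam where dist: "is_distribution lam" and supp: "supp lam = P ` {1..l}"
    and opt: "C11 lam = C11_lower (mixture lam)"
    unfolding I_minimized_def by blast
  obtain j where "\<not> card {i. (\<Sum>k=1..l. P k) $ i $ j \<noteq> 0} \<le> Suc 0"
    using assms(4) by (auto simp: not_le)
  then obtain i1 i2 where "i1 \<noteq> i2"
    and "(\<Sum>k=1..l. P k $ i1 $ j) \<noteq> 0" "(\<Sum>k=1..l. P k $ i2 $ j) \<noteq> 0"
    by (auto simp: card_le_Suc0_iff_eq)
  then obtain k1 k2 where k: "k1 \<in> {1..l}" "k2 \<in> {1..l}"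
    and hit: "P k1 $ i1 $ j \<noteq> 0" "P k2 $ i2 $ j \<noteq> 0"
    by (meson sum.not_neutral_contains_not_neutral)
  note exchange = perfect_exchange_cheaper[OF assms(1,2) _ _ \<open>i1 \<noteq> i2\<close> hit]
  have "lam (P k1) > 0" "lam (P k2) > 0"
    using dist supp k by (force simp: supp_def is_distribution_def order_le_less)+
  then have "C11_lower (mixture lam) < C11 lam"
    using C11_lower_less_if_exchange[OF dist _ _ exchange] assms(3) k by blast
  with opt show False
    by simp
qed

end
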